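(* Let $3\leq q<p$ be primes with $q-1\mid p-1$. Let $f:\mathbb{Z}_p\to\mathbb{Z}_q$ satisfy $f(0)=0$ and be such that the restriction of $f$ to $\mathbb{Z}_p^\times$ is a surjective group homomorphism $\mathbb{Z}_p^\times\to\mathbb{Z}_q^\times$ (of multiplicative groups). Let $A$ be the $p\times p$ matrix over the field $\mathbb{Z}_q$, with rows and columns indexed by $\mathbb{Z}_p$, given by $A_{i+j,i}=f(j)$ for $i,j\in\mathbb{Z}_p$. Then $A$ has rank $p-1$. *)

theory Defs
  imports "HOL-Analysis.Analysis" "Berlekamp_Zassenhaus.Finite_Field"
begin

text \<open>Z_p is modelled by the type 'p mod_ring with 'p :: prime_card (so p = CARD('p) is prime);
  likewise Z_q.  The matrix indexed by Z_p x Z_p is an element of 'q mod_ring ^ 'p mod_ring ^ 'p mod_ring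
  (HOL-Analysis), and rank is the HOL-Analysis rank of a matrix over a field.\<close>

end

theory Submission
  imports Defs
begin

text \<open>The matrix is the circulant \<open>A $ k $ i = f (k - i)\<close> of the multiplicative character \<open>f\<close>
  of the field \<open>\<int>\<^sub>p\<close> with values in \<open>\<int>\<^sub>q\<close>, and \<open>f\<close> is nontrivial
  because \<open>q \<ge> 3\<close>. Hence \<open>\<Sum>\<^sub>x f x = 0\<close>: every row of \<open>A\<close> sums to zero, and since \<open>p \<noteq> 0\<close> in
  \<open>\<int>\<^sub>q\<close> the all-ones vector lies outside the row space, so the rank is at most \<open>p - 1\<close>.
  Conversely, the correlation \<open>\<Sum>\<^sub>t f t / f (t - d)\<close> equals \<open>p - 1\<close> for \<open>d = 0\<close> and \<open>-1\<close>
  otherwise (substitute \<open>t = d s\<close> and use the involution \<open>s \<mapsto> s / (s - 1)\<close>), so the row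
  combination \<open>\<Sum>\<^sub>m row m A / f (m - k)\<close> is \<open>p e\<^sub>k - 1\<close>. Together with the all-ones vector these
  span everything, so the rank is at least \<open>p - 1\<close>.\<close>

locale multiplicative_character =
  fixes \<psi> :: "'a::{finite,field} \<Rightarrow> 'b::field"
  assumes zero [simp]: "\<psi> 0 = 0"
    and nonzero: "x \<noteq> 0 \<Longrightarrow> \<psi> x \<noteq> 0"
    and mult_nonzero: "x \<noteq> 0 \<Longrightarrow> y \<noteq> 0 \<Longrightarrow> \<psi> (x * y) = \<psi> x * \<psi> y"
begin

lemma mult: "\<psi> (x * y) = \<psi> x * \<psi> y"
  by (cases "x = 0 \<or> y = 0") (auto simp: mult_nonzero)

lemma one [simp]: "\<psi> 1 = 1"
  using mult[of 1 1] nonzero[of 1] by simp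

lemma inverse: "\<psi> (inverse x) = inverse (\<psi> x)"
proof (cases "x = 0")
  case False
  then have "\<psi> x * \<psi> (inverse x) = 1"
    by (simp flip: mult)
  then show ?thesis
    by (simp add: inverse_unique)
qed simp

lemma divide: "\<psi> (x / y) = \<psi> x / \<psi> y"
  by (simp add: divide_inverse mult inverse)

lemma sum_eq_0:
  assumes "\<psi> z \<notin> {0, 1}"
  shows "(\<Sum>x\<in>UNIV. \<psi> x) = 0"
proof -
  have "z \<noteq> 0" using assms by auto
  have "(\<Sum>x\<in>UNIV. \<psi> x) = (\<Sum>x\<in>UNIV. \<psi> (z * x))"
    by (rule sum.reindex_bij_witness[of _ "\<lambda>x. z * x" "\<lambda>x. x / z"]) (use \<open>z \<noteq> 0\<close> in auto)
  also have "\<dots> = \<psi> z * (\<Sum>x\<in>UNIV. \<psi> x)"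
    by (simp add: mult sum_distrib_left)
  finally have "(1 - \<psi> z) * (\<Sum>x\<in>UNIV. \<psi> x) = 0"
    by (simp add: algebra_simps)
  then show ?thesis
    using assms by simp
qed

lemma sum_divide_shift:
  assumes "\<psi> z \<notin> {0, 1}"
  shows "(\<Sum>t\<in>UNIV. \<psi> t / \<psi> (t - d)) = (if d = 0 then of_nat CARD('a) - 1 else - 1)"
proof (cases "d = 0")
  case True
  have "(\<Sum>t\<in>UNIV. \<psi> t / \<psi> t) = (\<Sum>t\<in>UNIV - {0}. \<psi> t / \<psi> t)"
    by (rule sum.mono_neutral_right) auto
  also have "\<dots> = of_nat (CARD('a) - 1)"
    by (simp add: nonzero)
  finally show ?thesis
    using True by (simp add: of_nat_diff)
next
  case False
  define g where "g s = s / (s - 1)" for s :: 'a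
  have g_involution: "g (g s) = s" and g_ne_1: "g s \<noteq> 1" if "s \<noteq> 1" for s
    using that by (auto simp: g_def field_simps)
  have "(\<Sum>t\<in>UNIV. \<psi> t / \<psi> (t - d)) = (\<Sum>s\<in>UNIV. \<psi> (d * s) / \<psi> (d * s - d))"
    by (rule sum.reindex_bij_witness[of _ "\<lambda>s. d * s" "\<lambda>t. t / d"]) (use False in auto)
  also have "\<dots> = (\<Sum>s\<in>UNIV. \<psi> (g s))"
  proof (rule sum.cong)
    fix s :: 'a
    have "d * s - d = d * (s - 1)"
      by (simp add: algebra_simps)
    then show "\<psi> (d * s) / \<psi> (d * s - d) = \<psi> (g s)"
      using nonzero[OF False] by (simp add: g_def divide mult)
  qed simp
  also have "\<dots> = (\<Sum>s\<in>UNIV - {1}. \<psi> (g s))"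
    by (rule sum.mono_neutral_right) (auto simp: g_def)
  also have "\<dots> = (\<Sum>u\<in>UNIV - {1}. \<psi> u)"
    by (rule sum.reindex_bij_witness[of _ g g]) (auto simp: g_involution g_ne_1)
  also have "\<dots> = - 1"
    using sum_eq_0[OF assms] by (simp add: sum_diff1)
  finally show ?thesis
    using False by simp
qed

end

lemma vec_dim_eq_card_minus_one:
  fixes R :: "('a::field ^ 'n) set"
  assumes "vec.span (insert u R) = UNIV" and "u \<notin> vec.span R"
  shows "vec.dim R = CARD('n) - 1"
proof -
  have "vec.dim (insert u R) = CARD('n)"
    by (metis assms(1) vec.dim_span vec_dim_card)
  then show ?thesis
    using vec.dim_insert[of u R] assms(2) by simp
qed

lemma rank_eq_card_minus_one:
  fixes A :: "'a::field ^ 'n ^ 'n"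
  assumes card: "of_nat CARD('n) \<noteq> (0::'a)"
    and row_sums: "A *v 1 = 0"
    and span_rows: "\<And>k. of_nat CARD('n) *s axis k 1 - 1 \<in> vec.span (rows A)"
  shows "rank A = CARD('n) - 1"
proof -
  define H where "H = {v :: 'a ^ 'n. (\<Sum>i\<in>UNIV. v $ i) = 0}"
  have "vec.subspace H"
    by (auto simp: vec.subspace_def H_def sum.distrib simp flip: sum_distrib_left)
  moreover have "rows A \<subseteq> H"
    using row_sums by (auto simp: rows_def row_def H_def vec_eq_iff matrix_vector_mult_def)
  ultimately have "vec.span (rows A) \<subseteq> H"
    by (rule vec.span_minimal[rotated])
  moreover have "1 \<notin> H"
    using card by (simp add: H_def)
  ultimately have one_notin: "1 \<notin> vec.span (rows A)"
    by blast
  have "axis k 1 \<in> vec.span (insert 1 (rows A))" for k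
  proof -
    have "axis k 1 =
        inverse (of_nat CARD('n)) *s ((of_nat CARD('n) *s axis k 1 - 1) + (1 :: 'a ^ 'n))"
      using card by simp
    also have "\<dots> \<in> vec.span (insert 1 (rows A))"
      using span_rows vec.span_mono[of "rows A" "insert 1 (rows A)"]
      by (intro vec.span_scale vec.span_add) (auto intro: vec.span_base)
    finally show ?thesis .
  qed
  then have "cart_basis \<subseteq> vec.span (insert 1 (rows A))"
    by (auto simp: cart_basis_def)
  then have "vec.span (insert 1 (rows A)) = UNIV"
    using vec.span_minimal[OF _ vec.subspace_span] by (metis span_cart_basis top.extremum_unique)
  then show ?thesis
    using vec_dim_eq_card_minus_one one_notin by (simp add: row_rank_def_gen)
qed

lemma (in multiplicative_character) rank_circulant:
  assumes card: "of_nat CARD('a) \<noteq> (0::'b)"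
    and nontrivial: "\<psi> z \<notin> {0, 1}"
    and A: "\<And>k i. A $ k $ i = \<psi> (k - i)"
  shows "rank A = CARD('a) - 1"
proof (rule rank_eq_card_minus_one[OF card])
  have "(\<Sum>i\<in>UNIV. \<psi> (k - i)) = (\<Sum>x\<in>UNIV. \<psi> x)" for k
    by (rule sum.reindex_bij_witness[of _ "\<lambda>x. k - x" "\<lambda>i. k - i"]) auto
  then show "A *v 1 = 0"
    using sum_eq_0[OF nontrivial] by (simp add: vec_eq_iff matrix_vector_mult_def A)
next
  fix k
  have "(\<Sum>m\<in>UNIV. inverse (\<psi> (m - k)) *s row m A) $ i =
      (of_nat CARD('a) *s axis k 1 - 1) $ i" for i
  proof -
    have "(\<Sum>m\<in>UNIV. inverse (\<psi> (m - k)) *s row m A) $ i =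
        (\<Sum>m\<in>UNIV. \<psi> (m - i) / \<psi> (m - k))"
      by (simp add: row_def A divide_inverse mult.commute)
    also have "\<dots> = (\<Sum>t\<in>UNIV. \<psi> t / \<psi> (t - (k - i)))"
      by (rule sum.reindex_bij_witness[of _ "\<lambda>t. t + i" "\<lambda>m. m - i"]) (auto simp: algebra_simps)
    also have "\<dots> = (of_nat CARD('a) *s axis k 1 - 1) $ i"
      by (simp add: sum_divide_shift[OF nontrivial] axis_def)
    finally show ?thesis .
  qed
  then have "(\<Sum>m\<in>UNIV. inverse (\<psi> (m - k)) *s row m A) = of_nat CARD('a) *s axis k 1 - 1"
    by (simp add: vec_eq_iff)
  moreover have "(\<Sum>m\<in>UNIV. inverse (\<psi> (m - k)) *s row m A) \<in> vec.span (rows A)"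
    by (intro vec.span_sum vec.span_scale vec.span_base) (auto simp: rows_def)
  ultimately show "of_nat CARD('a) *s axis k 1 - 1 \<in> vec.span (rows A)"
    by simp
qed

theorem lemma4p7:
  fixes f :: "'p::prime_card mod_ring \<Rightarrow> 'q::prime_card mod_ring"
  assumes "3 \<le> CARD('q)" and "CARD('q) < CARD('p)"
    and "(CARD('q) - 1) dvd (CARD('p) - 1)"
    and "f 0 = 0"
    and "\<And>x. x \<noteq> 0 \<Longrightarrow> f x \<noteq> 0"
    and "\<And>x y. x \<noteq> 0 \<Longrightarrow> y \<noteq> 0 \<Longrightarrow> f (x * y) = f x * f y"
    and "\<And>z. z \<noteq> 0 \<Longrightarrow> \<exists>x. x \<noteq> 0 \<and> f x = z"
    and "\<And>i j. A $ (i + j) $ i = f j"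
  shows "rank A = CARD('p) - 1"
proof -
  interpret multiplicative_character f
    using assms(4-6) by unfold_locales
  have "card {0, 1 :: 'q mod_ring} < card (UNIV :: 'q mod_ring set)"
    using assms(1) card_insert_le[of "{1 :: 'q mod_ring}" 0] by simp
  then have "{0, 1} \<noteq> (UNIV :: 'q mod_ring set)"
    by (metis less_irrefl)
  then obtain c :: "'q mod_ring" where "c \<notin> {0, 1}"
    by blast
  then obtain z where nontrivial: "f z \<notin> {0, 1}"
    using assms(7) by (metis insertCI)
  have "(of_nat CARD('p) :: 'q mod_ring) \<noteq> 0"
  proof
    assume "(of_nat CARD('p) :: 'q mod_ring) = 0"
    then have "CARD('q) dvd CARD('p)"
      by (rule of_nat_0_mod_ring_dvd)
    then show False
      using assms(2) primes_dvd_imp_eq[OF prime_card[where 'a = 'q] prime_card[where 'a = 'p]]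
      by simp
  qed
  moreover have "A $ k $ i = f (k - i)" for k i
    using assms(8)[of i "k - i"] by simp
  ultimately show ?thesis
    using rank_circulant[OF _ nontrivial, of A] by simp
qed

end
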